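(* For no $\alpha\in\mathbb R$ is a right circular cylinder in $\mathbb R^3$ (of any radius, any axis) an $\alpha$-stationary surface.
   Context: Let $\Sigma$ be a connected oriented surface immersed in $\mathbb R^3\setminus\{0\}$ with unit normal $\nu$ and mean curvature $H$ (sum of the principal curvatures). For $\alpha\in\mathbb R$, $\Sigma$ is called $\alpha$-stationary if $H(p)=\alpha\,\frac{\langle\nu(p),p\rangle}{|p|^2}$ for all $p\in\Sigma$. *)

theory Defs
  imports "HOL-Analysis.Analysis"
begin

text \<open>Partial derivatives, unit normal, fundamental forms and mean curvature
  (sum of principal curvatures) in the classical local-coordinate form.\<close>

type_synonym psurf = "real \<Rightarrow> real \<Rightarrow> real^3"

definition pdu :: "psurf \<Rightarrow> psurf" where
  "pdu X u v = vector_derivative (\<lambda>s. X s v) (at u)"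

definition pdv :: "psurf \<Rightarrow> psurf" where
  "pdv X u v = vector_derivative (\<lambda>t. X u t) (at v)"

definition unit_normal :: "psurf \<Rightarrow> psurf" where
  "unit_normal X u v = (1 / norm (cross3 (pdu X u v) (pdv X u v))) *\<^sub>R (cross3 (pdu X u v) (pdv X u v))"

definition mean_curvature :: "psurf \<Rightarrow> real \<Rightarrow> real \<Rightarrow> real" where
  "mean_curvature X u v =
     (let N = unit_normal X u v;
          E = pdu X u v \<bullet> pdu X u v;
          F = pdu X u v \<bullet> pdv X u v;
          G = pdv X u v \<bullet> pdv X u v;
          e = pdu (pdu X) u v \<bullet> N;
          f = pdv (pdu X) u v \<bullet> N;
          g = pdv (pdv X) u v \<bullet> N
      in (e * G - 2 * f * F + g * E) / (E * G - F\<^sup>2))"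

definition alpha_stationary :: "real \<Rightarrow> psurf \<Rightarrow> (real \<times> real) set \<Rightarrow> bool" where
  "alpha_stationary \<alpha> X U \<longleftrightarrow>
     (\<forall>(u,v)\<in>U. X u v \<noteq> 0 \<and>
        mean_curvature X u v = \<alpha> * (unit_normal X u v \<bullet> X u v) / (norm (X u v))\<^sup>2)"

text \<open>Right circular cylinder of radius r, axis through a with unit direction d,
  where (e1, e2, d) is an orthonormal frame.\<close>
definition cylinder :: "real^3 \<Rightarrow> real^3 \<Rightarrow> real^3 \<Rightarrow> real^3 \<Rightarrow> real \<Rightarrow> psurf" where
  "cylinder a e1 e2 d r \<theta> t = a + (r * cos \<theta>) *\<^sub>R e1 + (r * sin \<theta>) *\<^sub>R e2 + t *\<^sub>R d"

end

theory Submission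
  imports Defs
begin

unbundle cross3_syntax

text \<open>Along a ruling \<open>\<theta> = const\<close> of the cylinder the unit normal is constant and
  orthogonal to the axis, and the mean curvature is the constant \<open>\<plusminus>1/r \<noteq> 0\<close>.
  Hence \<open>\<langle>\<nu>, X\<rangle>\<close> is constant along the ruling, and \<open>\<alpha>\<close>-stationarity forces \<open>|X|\<^sup>2\<close>
  to be constant along it as well. But \<open>|X|\<^sup>2\<close> restricted to a line is a quadratic
  polynomial with positive leading coefficient.\<close>

lemma norm_less_norm_add_line:
  fixes p d :: "'a::real_inner"
  assumes "d \<noteq> 0"
  shows "\<exists>t. norm p < norm (p + t *\<^sub>R d)"
proof -
  have grows: "norm p < norm (p + t *\<^sub>R d)" if "0 \<le> t * (p \<bullet> d)" and "t \<noteq> 0" for t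
  proof -
    have "(norm (p + t *\<^sub>R d))\<^sup>2 = (norm p)\<^sup>2 + 2 * (t * (p \<bullet> d)) + t\<^sup>2 * (norm d)\<^sup>2"
      unfolding power2_norm_eq_inner
      by (simp add: inner_add_left inner_add_right inner_commute[of d p] algebra_simps power2_eq_square)
    moreover have "0 < t\<^sup>2 * (norm d)\<^sup>2"
      using that(2) assms by simp
    ultimately have "(norm p)\<^sup>2 < (norm (p + t *\<^sub>R d))\<^sup>2"
      using that(1) by linarith
    then show ?thesis
      by (rule power2_less_imp_less[OF _ norm_ge_zero])
  qed
  show ?thesis
  proof (cases "p \<bullet> d \<ge> 0")
    case True
    then show ?thesis
      by (intro exI[of _ 1] grows) auto
  next
    case False
    then show ?thesis
      by (intro exI[of _ "-1"] grows) auto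
  qed
qed

lemma cross3_eq_inner_scaleR_unit:
  fixes x y z :: "real^3"
  assumes "norm x = 1" and "x \<bullet> y = 0" and "x \<bullet> z = 0"
  shows "y \<times> z = (x \<bullet> (y \<times> z)) *\<^sub>R x"
proof (rule cross_dot_cancel)
  have "x \<bullet> x = 1"
    using assms(1) by (simp add: power2_norm_eq_inner[symmetric])
  then show "x \<bullet> (y \<times> z) = x \<bullet> ((x \<bullet> (y \<times> z)) *\<^sub>R x)"
    by simp
  show "x \<times> (y \<times> z) = x \<times> ((x \<bullet> (y \<times> z)) *\<^sub>R x)"
    using assms(2,3) by (simp add: Lagrange cross_mult_right)
  show "x \<noteq> 0"
    using assms(1) by auto
qed

locale orthonormal_frame =
  fixes e1 e2 d :: "real^3"
  assumes norm_e1: "norm e1 = 1" and norm_e2: "norm e2 = 1" and norm_d: "norm d = 1"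
    and e1_e2: "e1 \<bullet> e2 = 0" and e1_d: "e1 \<bullet> d = 0" and e2_d: "e2 \<bullet> d = 0"
begin

lemma frame_inner [simp]:
  "e1 \<bullet> e1 = 1" "e2 \<bullet> e2 = 1" "d \<bullet> d = 1"
  "e1 \<bullet> e2 = 0" "e2 \<bullet> e1 = 0" "e1 \<bullet> d = 0" "d \<bullet> e1 = 0" "e2 \<bullet> d = 0" "d \<bullet> e2 = 0"
  using norm_e1 norm_e2 norm_d e1_e2 e1_d e2_d
  by (simp_all add: power2_norm_eq_inner[symmetric] inner_commute)

definition orientation :: real where
  "orientation = e1 \<bullet> (e2 \<times> d)"

lemma cross_e2_d: "e2 \<times> d = orientation *\<^sub>R e1"
  unfolding orientation_def by (rule cross3_eq_inner_scaleR_unit) (simp_all add: norm_e1)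

lemma cross_e1_d: "e1 \<times> d = - orientation *\<^sub>R e2"
proof -
  have "d \<times> e1 = (e2 \<bullet> (d \<times> e1)) *\<^sub>R e2"
    by (rule cross3_eq_inner_scaleR_unit) (simp_all add: norm_e2)
  also have "e2 \<bullet> (d \<times> e1) = orientation"
    unfolding orientation_def using cross_triple[of e2 d e1] by (simp add: inner_commute)
  finally show ?thesis
    by (metis cross_skew scaleR_minus_left)
qed

lemma orientation_squared: "orientation\<^sup>2 = 1"
  using norm_cross[of e2 d] by (simp add: cross_e2_d norm_e1 norm_e2 norm_d)

end

lemma pdu_cylinder: "pdu (cylinder a e1 e2 d r) \<theta> t = (- r * sin \<theta>) *\<^sub>R e1 + (r * cos \<theta>) *\<^sub>R e2"
  unfolding pdu_def cylinder_def
  by (rule vector_derivative_at)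
    (auto intro!: derivative_eq_intros simp: has_vector_derivative_def fun_eq_iff algebra_simps)

lemma pdv_cylinder: "pdv (cylinder a e1 e2 d r) \<theta> t = d"
  unfolding pdv_def cylinder_def
  by (rule vector_derivative_at)
    (auto intro!: derivative_eq_intros simp: has_vector_derivative_def fun_eq_iff algebra_simps)

lemma pdu_pdu_cylinder:
  "pdu (pdu (cylinder a e1 e2 d r)) \<theta> t = (- r * cos \<theta>) *\<^sub>R e1 + (- r * sin \<theta>) *\<^sub>R e2"
  unfolding pdu_def[of "pdu _"] pdu_cylinder
  by (rule vector_derivative_at)
    (auto intro!: derivative_eq_intros simp: has_vector_derivative_def fun_eq_iff algebra_simps)

lemma pdv_pdu_cylinder: "pdv (pdu (cylinder a e1 e2 d r)) \<theta> t = 0"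
  unfolding pdv_def pdu_cylinder by simp

lemma pdv_pdv_cylinder: "pdv (pdv (cylinder a e1 e2 d r)) \<theta> t = 0"
  unfolding pdv_def[of "pdv _"] pdv_cylinder by simp

context orthonormal_frame
begin

lemma radial_inner_self [simp]:
  "(cos \<theta> *\<^sub>R e1 + sin \<theta> *\<^sub>R e2) \<bullet> (cos \<theta> *\<^sub>R e1 + sin \<theta> *\<^sub>R e2) = 1"
  by (simp add: inner_add_left inner_add_right flip: power2_eq_square)

lemma unit_normal_cylinder:
  assumes "r > 0"
  shows "unit_normal (cylinder a e1 e2 d r) \<theta> t = orientation *\<^sub>R (cos \<theta> *\<^sub>R e1 + sin \<theta> *\<^sub>R e2)"
proof -
  let ?n = "cos \<theta> *\<^sub>R e1 + sin \<theta> *\<^sub>R e2"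
  have cross: "pdu (cylinder a e1 e2 d r) \<theta> t \<times> pdv (cylinder a e1 e2 d r) \<theta> t
      = (r * orientation) *\<^sub>R ?n"
    unfolding pdu_cylinder pdv_cylinder cross_add_left cross_mult_left cross_e1_d cross_e2_d
    by (simp add: scaleR_add_right ac_simps)
  have "norm ?n = 1"
    by (simp add: norm_eq_sqrt_inner)
  moreover have "\<bar>orientation\<bar> = 1"
    using orientation_squared by (simp add: abs_square_eq_1)
  ultimately show ?thesis
    using assms by (simp add: unit_normal_def cross abs_mult)
qed

lemma mean_curvature_cylinder:
  assumes "r > 0"
  shows "mean_curvature (cylinder a e1 e2 d r) \<theta> t = - orientation / r"
proof -
  let ?X = "cylinder a e1 e2 d r" and ?n = "cos \<theta> *\<^sub>R e1 + sin \<theta> *\<^sub>R e2"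
  have E: "pdu ?X \<theta> t \<bullet> pdu ?X \<theta> t = r\<^sup>2"
    unfolding pdu_cylinder
    by (simp add: inner_add_left inner_add_right power2_eq_square algebra_simps) (simp flip: distrib_left)
  have F: "pdu ?X \<theta> t \<bullet> pdv ?X \<theta> t = 0" and G: "pdv ?X \<theta> t \<bullet> pdv ?X \<theta> t = 1"
    unfolding pdu_cylinder pdv_cylinder by (simp_all add: inner_add_left inner_diff_left)
  have "pdu (pdu ?X) \<theta> t = (- r) *\<^sub>R ?n"
    unfolding pdu_pdu_cylinder by (simp add: scaleR_add_right)
  then have e: "pdu (pdu ?X) \<theta> t \<bullet> unit_normal ?X \<theta> t = - r * orientation"
    by (simp add: unit_normal_cylinder[OF assms])
  show ?thesis
    using assms unfolding mean_curvature_def Let_def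
    by (simp add: E F G e pdv_pdu_cylinder pdv_pdv_cylinder power2_eq_square)
qed

lemma alpha_stationary_cylinder_norm:
  assumes "r > 0" and "alpha_stationary \<alpha> (cylinder a e1 e2 d r) U" and "(\<theta>, t) \<in> U"
  shows "(norm (cylinder a e1 e2 d r \<theta> t))\<^sup>2
    = - r * \<alpha> * ((cos \<theta> *\<^sub>R e1 + sin \<theta> *\<^sub>R e2) \<bullet> a + r)"
proof -
  let ?X = "cylinder a e1 e2 d r \<theta> t" and ?n = "cos \<theta> *\<^sub>R e1 + sin \<theta> *\<^sub>R e2"
  have "?X = a + r *\<^sub>R ?n + t *\<^sub>R d"
    by (simp add: cylinder_def scaleR_add_right)
  then have "?n \<bullet> ?X = ?n \<bullet> a + r"
    by (simp add: inner_add_left inner_add_right)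
  then have "- orientation / r = \<alpha> * (orientation * (?n \<bullet> a + r)) / (norm ?X)\<^sup>2"
    and "?X \<noteq> 0"
    using assms unfolding alpha_stationary_def
    by (auto simp: mean_curvature_cylinder unit_normal_cylinder)
  then have "orientation * ((norm ?X)\<^sup>2 + r * \<alpha> * (?n \<bullet> a + r)) = 0"
    using assms(1) by (simp add: field_simps)
  moreover have "orientation \<noteq> 0"
    using orientation_squared by auto
  ultimately show ?thesis
    by (simp add: eq_neg_iff_add_eq_0)
qed

end

theorem mainTheorem4:
  fixes \<alpha> r :: real and a e1 e2 d :: "real^3"
  assumes "r > 0"
    and "norm e1 = 1" and "norm e2 = 1" and "norm d = 1"
    and "e1 \<bullet> e2 = 0" and "e1 \<bullet> d = 0" and "e2 \<bullet> d = 0"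
  shows "\<not> alpha_stationary \<alpha> (cylinder a e1 e2 d r) UNIV"
proof
  assume stationary: "alpha_stationary \<alpha> (cylinder a e1 e2 d r) UNIV"
  interpret orthonormal_frame e1 e2 d
    using assms(2-7) by unfold_locales
  let ?p = "cylinder a e1 e2 d r 0 0"
  have "d \<noteq> 0"
    using assms(4) by auto
  then obtain t where "norm ?p < norm (?p + t *\<^sub>R d)"
    using norm_less_norm_add_line by blast
  also have "?p + t *\<^sub>R d = cylinder a e1 e2 d r 0 t"
    by (simp add: cylinder_def)
  finally have "(norm ?p)\<^sup>2 < (norm (cylinder a e1 e2 d r 0 t))\<^sup>2"
    by (simp add: power_strict_mono)
  then show False
    using alpha_stationary_cylinder_norm[OF assms(1) stationary] by simp
qed
end
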